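(* There exists a family of finite sets $u^{\alpha}_n\subseteq\omega_1$, indexed by $\alpha<\omega_1$ and positive integers $n$, such that for all $\alpha<\omega_1$ and all $n\geq 1$: (i) $|u^{\alpha}_n|<n+1$; (ii) $\alpha\in u^{\alpha}_n\subseteq u^{\alpha}_{n+1}$; (iii) $\bigcup_n u^{\alpha}_n=\alpha+1$ (i.e. $=\{\beta:\beta\le\alpha\}$); (iv) if $\beta\in u^{\alpha}_n$ then $u^{\beta}_n=u^{\alpha}_n\cap(\beta+1)$; (v) $\lim_{n\to\infty}\frac{|u^{\alpha}_n|}{n+1}=0$.
   Context: $\omega_1$ is the first uncountable ordinal; ordinals are identified with the set of smaller ordinals, so $\beta+1=\{\gamma:\gamma\le\beta\}$. *)

theory Defs
  imports Complex_Main "HOL-Library.Countable_Set"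
begin

text \<open>omega_1 is represented abstractly: any well-ordered type that is uncountable
  but all of whose proper initial segments are countable is order-isomorphic to omega_1.
  Ordinals below omega_1 are the elements of this type; beta+1 = {gamma. gamma <= beta}.\<close>

end

theory Submission
  imports Defs
begin

(* A minimal alpha gets u^alpha_n = {alpha}.
  Otherwise choose a nondecreasing sequence c_0 <= c_1 <= ... cofinal below alpha (there are
  only countably many predecessors) and put u^alpha_n = {alpha} \<union> u^(c_k)_n, where the
  stage k = k(n) is nondecreasing in n and tends to infinity. The stage moves from k to k+1
  only at a level n where u^(c_k)_n \<subseteq> u^(c_(k+1))_n, which keeps u^alpha_n increasing in n,
  and where from then on |u^(c_(k+1))_m| + 1 <= m/(k+2), which gives |u^alpha_n| <= n/(k+1)
  and hence (i) and (v). Since alpha lies above every element of u^(c_k)_n, coherence (iv) is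
  inherited from u^(c_k); and as k(n) grows and the c_k are cofinal, the union is alpha+1. *)

lemma ratio_tendsto_zero_imp_eventually_bound:
  fixes a :: "nat \<Rightarrow> nat"
  assumes "(\<lambda>n. real (a n) / real (n + 1)) \<longlonglongrightarrow> 0"
  shows "\<forall>\<^sub>F n in sequentially. (a n + 1) * (K + 1) \<le> n"
proof -
  have "\<forall>\<^sub>F n in sequentially. real (a n) / real (n + 1) < 1 / (2 * (real K + 1))"
    using assms by (rule order_tendstoD) simp
  moreover have "\<forall>\<^sub>F n in sequentially. 2 * K + 3 \<le> n"
    by (rule eventually_ge_at_top)
  ultimately show ?thesis
  proof eventually_elim
    case (elim n)
    then have "real (2 * (a n * (K + 1))) < real (n + 1)"
      by (simp add: field_simps)
    then have "2 * (a n * (K + 1)) \<le> n"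
      by linarith
    with elim(2) show ?case
      by (simp add: algebra_simps)
  qed
qed

lemma eventually_bound_imp_ratio_tendsto_zero:
  fixes a :: "nat \<Rightarrow> nat"
  assumes "\<And>K. \<forall>\<^sub>F n in sequentially. a n * (K + 1) \<le> n"
  shows "(\<lambda>n. real (a n) / real (n + 1)) \<longlonglongrightarrow> 0"
proof (rule order_tendstoI)
  fix r :: real
  assume "r < 0"
  then show "\<forall>\<^sub>F n in sequentially. r < real (a n) / real (n + 1)"
    by (simp add: less_le_trans)
next
  fix r :: real
  assume "0 < r"
  obtain K :: nat where "1 / r < real K"
    using reals_Archimedean2 by blast
  then have K: "1 < r * (real K + 1)"
    using \<open>0 < r\<close> by (simp add: field_simps)
  from assms[of K] show "\<forall>\<^sub>F n in sequentially. real (a n) / real (n + 1) < r"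
  proof eventually_elim
    case (elim n)
    have "real (a n) * (real K + 1) \<le> real n"
      using elim by (metis of_nat_le_iff of_nat_mult of_nat_Suc Suc_eq_plus1 add.commute)
    also have "\<dots> < real n + 1"
      by simp
    also have "\<dots> < (real n + 1) * (r * (real K + 1))"
      using K by (simp add: mult_less_cancel_left1)
    also have "\<dots> = r * (real n + 1) * (real K + 1)"
      by (simp add: algebra_simps)
    finally have "real (a n) < r * (real n + 1)"
      by (simp add: mult_less_cancel_right)
    then show ?case
      by (simp add: field_simps)
  qed
qed

definition coherent_at :: "('a::linorder \<Rightarrow> nat \<Rightarrow> 'a set) \<Rightarrow> 'a \<Rightarrow> bool" where
  "coherent_at u \<alpha> \<longleftrightarrow> (\<forall>n\<ge>1.
        finite (u \<alpha> n) \<and>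
        card (u \<alpha> n) < n + 1 \<and>
        \<alpha> \<in> u \<alpha> n \<and> u \<alpha> n \<subseteq> u \<alpha> (Suc n) \<and>
        (\<forall>\<beta>\<in>u \<alpha> n. u \<beta> n = u \<alpha> n \<inter> {\<gamma>. \<gamma> \<le> \<beta>})) \<and>
      (\<Union>n\<in>{1..}. u \<alpha> n) = {\<beta>. \<beta> \<le> \<alpha>} \<and>
      (\<lambda>n. real (card (u \<alpha> n)) / real (n + 1)) \<longlonglongrightarrow> 0"

lemma coherent_atD:
  assumes "coherent_at u \<alpha>" and "1 \<le> n"
  shows "finite (u \<alpha> n)" and "\<alpha> \<in> u \<alpha> n" and "u \<alpha> n \<subseteq> u \<alpha> (Suc n)"
    and "\<beta> \<in> u \<alpha> n \<Longrightarrow> u \<beta> n = u \<alpha> n \<inter> {\<gamma>. \<gamma> \<le> \<beta>}"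
  using assms unfolding coherent_at_def by blast+

lemma coherent_at_UN: "coherent_at u \<alpha> \<Longrightarrow> (\<Union>n\<in>{1..}. u \<alpha> n) = {\<beta>. \<beta> \<le> \<alpha>}"
  unfolding coherent_at_def by blast

lemma coherent_at_ratio:
  "coherent_at u \<alpha> \<Longrightarrow> (\<lambda>n. real (card (u \<alpha> n)) / real (n + 1)) \<longlonglongrightarrow> 0"
  unfolding coherent_at_def by blast

lemma coherent_at_le: "coherent_at u \<alpha> \<Longrightarrow> 1 \<le> n \<Longrightarrow> \<beta> \<in> u \<alpha> n \<Longrightarrow> \<beta> \<le> \<alpha>"
  using coherent_at_UN by fastforce

lemma coherent_at_mono:
  assumes "coherent_at u \<alpha>" and "1 \<le> n" and "n \<le> m"
  shows "u \<alpha> n \<subseteq> u \<alpha> m"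
  using \<open>n \<le> m\<close>
proof (induction m rule: dec_induct)
  case (step m)
  then show ?case
    using coherent_atD(3)[OF assms(1), of m] \<open>1 \<le> n\<close> by auto
qed simp

lemma coherent_at_eventually_subset:
  assumes "coherent_at u \<alpha>" and "\<beta> \<le> \<alpha>"
  shows "\<forall>\<^sub>F n in sequentially. u \<beta> n \<subseteq> u \<alpha> n"
proof -
  obtain N where "1 \<le> N" and "\<beta> \<in> u \<alpha> N"
    using coherent_at_UN[OF assms(1)] \<open>\<beta> \<le> \<alpha>\<close> by blast
  have "u \<beta> n \<subseteq> u \<alpha> n" if "N \<le> n" for n
  proof -
    have "\<beta> \<in> u \<alpha> n"
      using coherent_at_mono[OF assms(1) \<open>1 \<le> N\<close> that] \<open>\<beta> \<in> u \<alpha> N\<close> by blast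
    then show ?thesis
      using coherent_atD(4)[OF assms(1)] \<open>1 \<le> N\<close> that by auto
  qed
  then show ?thesis
    unfolding eventually_sequentially by blast
qed

lemma coherent_at_singleton:
  assumes "u \<alpha> = (\<lambda>n. {\<alpha>})" and "\<And>\<beta>. \<not> \<beta> < \<alpha>"
  shows "coherent_at u \<alpha>"
proof -
  have "{\<beta>. \<beta> \<le> \<alpha>} = {\<alpha>}"
    using assms(2) by (auto simp: order.order_iff_strict)
  moreover have "(\<lambda>n. 1 / real (n + 1)) \<longlonglongrightarrow> 0"
    using LIMSEQ_inverse_real_of_nat by (simp add: inverse_eq_divide)
  ultimately show ?thesis
    unfolding coherent_at_def by (simp add: assms(1))
qed

definition thin_from :: "(nat \<Rightarrow> nat \<Rightarrow> 'a set) \<Rightarrow> nat \<Rightarrow> nat \<Rightarrow> bool" where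
  "thin_from v k N \<longleftrightarrow> (\<forall>n\<ge>N. (card (v k n) + 1) * (k + 1) \<le> n)"

fun stage :: "(nat \<Rightarrow> nat \<Rightarrow> 'a set) \<Rightarrow> nat \<Rightarrow> nat option" where
  "stage v 0 = None"
| "stage v (Suc n) = (case stage v n of
      None \<Rightarrow> if thin_from v 0 (Suc n) then Some 0 else None
    | Some k \<Rightarrow> if thin_from v (Suc k) (Suc n) \<and> v k (Suc n) \<subseteq> v (Suc k) (Suc n)
                then Some (Suc k) else Some k)"

definition glue :: "'a \<Rightarrow> (nat \<Rightarrow> nat \<Rightarrow> 'a set) \<Rightarrow> nat \<Rightarrow> 'a set" where
  "glue \<alpha> v n = (case stage v n of None \<Rightarrow> {\<alpha>} | Some k \<Rightarrow> insert \<alpha> (v k n))"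

lemma thin_from_mono: "thin_from v k N \<Longrightarrow> N \<le> N' \<Longrightarrow> thin_from v k N'"
  unfolding thin_from_def by auto

lemma stage_Some_pos: "stage v n = Some k \<Longrightarrow> 1 \<le> n"
  by (cases n) auto

lemma stage_Suc_Some:
  "stage v n = Some k \<Longrightarrow> stage v (Suc n) = Some k \<or>
     stage v (Suc n) = Some (Suc k) \<and> v k (Suc n) \<subseteq> v (Suc k) (Suc n)"
  by auto

lemma stage_Some_thin_from: "stage v n = Some k \<Longrightarrow> thin_from v k n"
proof (induction n arbitrary: k)
  case (Suc n)
  show ?case
  proof (cases "stage v n")
    case None
    with Suc.prems show ?thesis by (auto split: if_splits)
  next
    case (Some j)
    with Suc.prems stage_Suc_Some[OF Some] have "k = j \<or> k = Suc j \<and> thin_from v k (Suc n)"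
      by (auto split: if_splits)
    with thin_from_mono[OF Suc.IH[OF Some], of "Suc n"] show ?thesis
      by auto
  qed
qed simp

lemma stage_mono:
  assumes "stage v n = Some k" and "n \<le> m"
  shows "\<exists>k'\<ge>k. stage v m = Some k'"
  using \<open>n \<le> m\<close>
proof (induction m rule: dec_induct)
  case (step m)
  then obtain k' where "k \<le> k'" and "stage v m = Some k'"
    by blast
  with stage_Suc_Some[of v m k'] show ?case
    using le_SucI by blast
qed (use assms in blast)

lemma stage_unbounded:
  assumes thin: "\<And>k. \<exists>N. thin_from v k N"
    and subset: "\<And>k. \<forall>\<^sub>F n in sequentially. v k n \<subseteq> v (Suc k) n"
  shows "\<exists>n. \<exists>k\<ge>K. stage v n = Some k"
proof (induction K)
  case 0
  obtain N where "thin_from v 0 N"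
    using thin by blast
  then have "thin_from v 0 (Suc N)"
    using thin_from_mono le_SucI by blast
  then have "stage v (Suc N) \<noteq> None"
    by (auto split: option.split)
  then show ?case
    by blast
next
  case (Suc K)
  then obtain n k where "K \<le> k" and nk: "stage v n = Some k"
    by blast
  show ?case
  proof (cases "Suc K \<le> k")
    case False
    then have "k = K"
      using \<open>K \<le> k\<close> by simp
    obtain N1 where N1: "thin_from v (Suc k) N1"
      using thin by blast
    obtain N2 where N2: "\<And>m. N2 \<le> m \<Longrightarrow> v k m \<subseteq> v (Suc k) m"
      using subset[of k] unfolding eventually_sequentially by blast
    define M where "M = max n (max N1 N2)"
    obtain j where "k \<le> j" and j: "stage v M = Some j"
      using stage_mono[OF nk, of M] unfolding M_def by auto
    have "thin_from v (Suc k) (Suc M)" and "v k (Suc M) \<subseteq> v (Suc k) (Suc M)"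
      using thin_from_mono[OF N1] N2 unfolding M_def by auto
    then have "stage v (Suc M) = Some (Suc k) \<or> Suc k \<le> j"
      using j \<open>k \<le> j\<close> by (cases "j = k") auto
    then show ?thesis
      using \<open>k = K\<close> j by blast
  qed (use nk in blast)
qed

lemma stage_eventually_ge:
  assumes "\<And>k. \<exists>N. thin_from v k N"
    and "\<And>k. \<forall>\<^sub>F n in sequentially. v k n \<subseteq> v (Suc k) n"
  shows "\<forall>\<^sub>F n in sequentially. \<exists>k\<ge>K. stage v n = Some k"
proof -
  obtain n0 k0 where "K \<le> k0" and n0: "stage v n0 = Some k0"
    using stage_unbounded[of v K, OF assms] by blast
  have "\<exists>k\<ge>K. stage v n = Some k" if "n0 \<le> n" for n
    using stage_mono[OF n0 that] \<open>K \<le> k0\<close> le_trans by blast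
  then show ?thesis
    unfolding eventually_sequentially by blast
qed

lemma card_glue_mult_le:
  assumes "stage v n = Some k"
  shows "card (glue \<alpha> v n) * (k + 1) \<le> n"
proof -
  have "card (glue \<alpha> v n) \<le> card (v k n) + 1"
    using assms by (cases "finite (v k n)") (auto simp: glue_def card_insert_if)
  then show ?thesis
    using stage_Some_thin_from[OF assms] unfolding thin_from_def
    by (meson le_refl le_trans mult_le_mono1)
qed

lemma card_glue_less: "1 \<le> n \<Longrightarrow> card (glue \<alpha> v n) < n + 1"
  using card_glue_mult_le[of v n _ \<alpha>]
  by (cases "stage v n") (auto simp: glue_def intro: le_trans[OF mult_le_mono2[of 1]])

lemma mem_glue_iff:
  "\<beta> \<in> glue \<alpha> v n \<longleftrightarrow> \<beta> = \<alpha> \<or> (\<exists>k. stage v n = Some k \<and> \<beta> \<in> v k n)"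
  by (auto simp: glue_def split: option.split)

lemma finite_glue: "(\<And>k. finite (v k n)) \<Longrightarrow> finite (glue \<alpha> v n)"
  by (auto simp: glue_def split: option.split)

lemma glue_mono:
  assumes "\<And>k n. 1 \<le> n \<Longrightarrow> v k n \<subseteq> v k (Suc n)"
  shows "glue \<alpha> v n \<subseteq> glue \<alpha> v (Suc n)"
proof (cases "stage v n")
  case None
  then show ?thesis
    by (auto simp: glue_def split: option.split)
next
  case (Some k)
  have "v k n \<subseteq> v k (Suc n)"
    using assms stage_Some_pos[OF Some] .
  with stage_Suc_Some[OF Some] show ?thesis
    using Some by (auto simp: glue_def)
qed

lemma glue_ratio_tendsto_zero:
  assumes "\<And>k. \<exists>N. thin_from v k N"
    and "\<And>k. \<forall>\<^sub>F n in sequentially. v k n \<subseteq> v (Suc k) n"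
  shows "(\<lambda>n. real (card (glue \<alpha> v n)) / real (n + 1)) \<longlonglongrightarrow> 0"
proof (rule eventually_bound_imp_ratio_tendsto_zero)
  fix K
  from stage_eventually_ge[of v K, OF assms]
  show "\<forall>\<^sub>F n in sequentially. card (glue \<alpha> v n) * (K + 1) \<le> n"
  proof eventually_elim
    case (elim n)
    then obtain k where "K \<le> k" and "stage v n = Some k"
      by blast
    then show ?case
      using card_glue_mult_le[of v n k \<alpha>] by (meson add_le_mono1 le_trans mult_le_mono2)
  qed
qed

context
  fixes u :: "'a::linorder \<Rightarrow> nat \<Rightarrow> 'a set" and \<alpha> :: 'a and c :: "nat \<Rightarrow> 'a"
  assumes u_\<alpha>: "u \<alpha> = glue \<alpha> (\<lambda>k. u (c k))"
    and mono_c: "mono c"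
    and c_less: "\<And>k. c k < \<alpha>"
    and c_cofinal: "\<And>\<beta>. \<beta> < \<alpha> \<Longrightarrow> \<exists>k. \<beta> \<le> c k"
    and coherent_c: "\<And>k. coherent_at u (c k)"
begin

lemma mem_glue_le: "1 \<le> n \<Longrightarrow> \<beta> \<in> u \<alpha> n \<Longrightarrow> \<beta> \<le> \<alpha>"
  using coherent_at_le[OF coherent_c] c_less unfolding u_\<alpha> mem_glue_iff
  by (metis order.refl order.trans less_imp_le)

lemma glue_coherent:
  assumes "1 \<le> n" and "\<beta> \<in> u \<alpha> n"
  shows "u \<beta> n = u \<alpha> n \<inter> {\<gamma>. \<gamma> \<le> \<beta>}"
proof (cases "\<beta> = \<alpha>")
  case True
  then show ?thesis
    using mem_glue_le[OF \<open>1 \<le> n\<close>] by auto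
next
  case False
  then obtain k where k: "stage (\<lambda>k. u (c k)) n = Some k" and \<beta>: "\<beta> \<in> u (c k) n"
    using assms(2) unfolding u_\<alpha> mem_glue_iff by blast
  have "\<not> \<alpha> \<le> \<beta>"
    using coherent_at_le[OF coherent_c \<open>1 \<le> n\<close> \<beta>] c_less[of k] by auto
  then show ?thesis
    using coherent_atD(4)[OF coherent_c \<open>1 \<le> n\<close> \<beta>] k by (auto simp: u_\<alpha> glue_def)
qed

lemma glue_Suc_subset: "u \<alpha> n \<subseteq> u \<alpha> (Suc n)"
  unfolding u_\<alpha> by (intro glue_mono coherent_atD(3)[OF coherent_c])

lemma glue_thin_from: "\<exists>N. thin_from (\<lambda>k. u (c k)) k N"
  using ratio_tendsto_zero_imp_eventually_bound[OF coherent_at_ratio[OF coherent_c], of k k]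
  unfolding thin_from_def eventually_sequentially by blast

lemma glue_eventually_subset: "\<forall>\<^sub>F n in sequentially. u (c k) n \<subseteq> u (c (Suc k)) n"
  using coherent_at_eventually_subset[OF coherent_c] mono_c by (simp add: monoD)

lemma glue_UN: "(\<Union>n\<in>{1..}. u \<alpha> n) = {\<beta>. \<beta> \<le> \<alpha>}"
proof (intro equalityI subsetI)
  fix \<beta>
  assume "\<beta> \<in> {\<beta>. \<beta> \<le> \<alpha>}"
  then consider "\<beta> = \<alpha>" | "\<beta> < \<alpha>"
    by fastforce
  then show "\<beta> \<in> (\<Union>n\<in>{1..}. u \<alpha> n)"
  proof cases
    case 1
    then show ?thesis
      by (auto simp: u_\<alpha> mem_glue_iff)
  next
    case 2
    then obtain j where "\<beta> \<le> c j"
      using c_cofinal by blast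
    obtain n k where "j \<le> k" and k: "stage (\<lambda>k. u (c k)) n = Some k"
      using stage_unbounded[of "\<lambda>k. u (c k)" j, OF glue_thin_from glue_eventually_subset]
      by blast
    have "c k \<in> u \<alpha> n"
      using k coherent_atD(2)[OF coherent_c stage_Some_pos[OF k]] by (auto simp: u_\<alpha> mem_glue_iff)
    have "\<beta> \<le> c k"
      using \<open>\<beta> \<le> c j\<close> monoD[OF mono_c \<open>j \<le> k\<close>] by simp
    then obtain m where "1 \<le> m" and "\<beta> \<in> u (c k) m"
      using coherent_at_UN[OF coherent_c] by blast
    define M where "M = max n m"
    have "1 \<le> M"
      using \<open>1 \<le> m\<close> by (simp add: M_def)
    have "\<beta> \<in> u (c k) M"
      using coherent_at_mono[OF coherent_c[of k] \<open>1 \<le> m\<close>, of M] \<open>\<beta> \<in> u (c k) m\<close>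
      by (auto simp: M_def)
    moreover have "c k \<in> u \<alpha> M"
      using \<open>c k \<in> u \<alpha> n\<close> lift_Suc_mono_le[of "u \<alpha>", OF glue_Suc_subset, of n M]
      by (auto simp: M_def)
    ultimately show ?thesis
      using glue_coherent[OF \<open>1 \<le> M\<close>] \<open>1 \<le> M\<close> by blast
  qed
qed (use mem_glue_le in blast)

lemma coherent_at_glue: "coherent_at u \<alpha>"
  unfolding coherent_at_def
proof (intro conjI allI impI ballI)
  fix n :: nat
  assume "1 \<le> n"
  show "finite (u \<alpha> n)"
    unfolding u_\<alpha> by (intro finite_glue coherent_atD(1)[OF coherent_c \<open>1 \<le> n\<close>])
  show "card (u \<alpha> n) < n + 1"
    unfolding u_\<alpha> using \<open>1 \<le> n\<close> by (rule card_glue_less)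
  show "\<alpha> \<in> u \<alpha> n"
    by (simp add: u_\<alpha> mem_glue_iff)
  show "u \<alpha> n \<subseteq> u \<alpha> (Suc n)"
    by (rule glue_Suc_subset)
  show "u \<beta> n = u \<alpha> n \<inter> {\<gamma>. \<gamma> \<le> \<beta>}" if "\<beta> \<in> u \<alpha> n" for \<beta>
    using \<open>1 \<le> n\<close> that by (rule glue_coherent)
next
  show "(\<Union>n\<in>{1..}. u \<alpha> n) = {\<beta>. \<beta> \<le> \<alpha>}"
    by (rule glue_UN)
  show "(\<lambda>n. real (card (u \<alpha> n)) / real (n + 1)) \<longlonglongrightarrow> 0"
    unfolding u_\<alpha> by (intro glue_ratio_tendsto_zero glue_thin_from glue_eventually_subset)
qed

end

definition cofinal_seq :: "'a::linorder set \<Rightarrow> nat \<Rightarrow> 'a" where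
  "cofinal_seq S k = Max (from_nat_into S ` {..k})"

lemma cofinal_seq_in:
  assumes "S \<noteq> {}"
  shows "cofinal_seq S k \<in> S"
proof -
  have "cofinal_seq S k \<in> from_nat_into S ` {..k}"
    unfolding cofinal_seq_def by (rule Max_in) auto
  then show ?thesis
    using from_nat_into[OF assms] by auto
qed

lemma mono_cofinal_seq: "mono (cofinal_seq S)"
  unfolding cofinal_seq_def by (intro monoI Max_mono image_mono) auto

lemma cofinal_seq_cofinal:
  assumes "countable S" and "x \<in> S"
  shows "\<exists>k. x \<le> cofinal_seq S k"
proof -
  obtain k where "x = from_nat_into S k"
    using from_nat_into_surj[OF assms] by blast
  then have "x \<le> cofinal_seq S k"
    unfolding cofinal_seq_def by (intro Max_ge) auto
  then show ?thesis ..
qed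

definition extend_family :: "('a::wellorder \<Rightarrow> nat \<Rightarrow> 'a set) \<Rightarrow> 'a \<Rightarrow> nat \<Rightarrow> 'a set" where
  "extend_family u \<alpha> =
    (if \<exists>\<beta>. \<beta> < \<alpha> then glue \<alpha> (\<lambda>k. u (cofinal_seq {\<beta>. \<beta> < \<alpha>} k)) else (\<lambda>n. {\<alpha>}))"

definition coherent_family :: "'a::wellorder \<Rightarrow> nat \<Rightarrow> 'a set" where
  "coherent_family = wfrec {(x, y). x < y} extend_family"

lemma coherent_family_unfold:
  "(coherent_family :: 'a::wellorder \<Rightarrow> nat \<Rightarrow> 'a set) = extend_family coherent_family"
  unfolding coherent_family_def
proof (rule wfrec_fixpoint)
  show "adm_wf {(x, y). x < y} (extend_family :: ('a \<Rightarrow> nat \<Rightarrow> 'a set) \<Rightarrow> _)"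
    unfolding adm_wf_def
  proof (intro allI impI)
    fix f g :: "'a \<Rightarrow> nat \<Rightarrow> 'a set" and \<alpha> :: 'a
    assume "\<forall>\<beta>. (\<beta>, \<alpha>) \<in> {(x, y). x < y} \<longrightarrow> f \<beta> = g \<beta>"
    then have "f (cofinal_seq {\<beta>. \<beta> < \<alpha>} k) = g (cofinal_seq {\<beta>. \<beta> < \<alpha>} k)"
      if "\<exists>\<beta>. \<beta> < \<alpha>" for k
      using cofinal_seq_in[of "{\<beta>. \<beta> < \<alpha>}" k] that by auto
    then show "extend_family f \<alpha> = extend_family g \<alpha>"
      unfolding extend_family_def by simp
  qed
qed (rule wf)

lemma coherent_at_coherent_family:
  assumes "\<And>a::'a::wellorder. countable {x. x < a}"
  shows "coherent_at coherent_family (\<alpha>::'a)"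
proof (induction \<alpha> rule: less_induct)
  case (less \<alpha>)
  let ?S = "{\<beta>. \<beta> < \<alpha>}"
  show ?case
  proof (cases "?S = {}")
    case True
    then show ?thesis
      by (subst coherent_family_unfold, intro coherent_at_singleton) (auto simp: extend_family_def)
  next
    case False
    show ?thesis
    proof (rule coherent_at_glue[where c = "cofinal_seq ?S"])
      show "coherent_family \<alpha> = glue \<alpha> (\<lambda>k. coherent_family (cofinal_seq ?S k))"
        using False by (subst coherent_family_unfold) (simp add: extend_family_def)
      show "mono (cofinal_seq ?S)"
        by (rule mono_cofinal_seq)
      show "cofinal_seq ?S k < \<alpha>" for k
        using cofinal_seq_in[OF False] by simp
      show "\<exists>k. \<beta> \<le> cofinal_seq ?S k" if "\<beta> < \<alpha>" for \<beta>
        using cofinal_seq_cofinal[OF assms] that by simp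
      show "coherent_at coherent_family (cofinal_seq ?S k)" for k
        using less.IH cofinal_seq_in[OF False] by simp
    qed
  qed
qed

theorem mainTheorem2:
  assumes "uncountable (UNIV :: 'a::wellorder set)"
    and "\<And>a::'a. countable {x. x < a}"
  shows "\<exists>u :: 'a \<Rightarrow> nat \<Rightarrow> 'a set.
    \<forall>\<alpha>. (\<forall>n\<ge>1.
        finite (u \<alpha> n) \<and>
        card (u \<alpha> n) < n + 1 \<and>
        \<alpha> \<in> u \<alpha> n \<and> u \<alpha> n \<subseteq> u \<alpha> (Suc n) \<and>
        (\<forall>\<beta>\<in>u \<alpha> n. u \<beta> n = u \<alpha> n \<inter> {\<gamma>. \<gamma> \<le> \<beta>})) \<and>
      (\<Union>n\<in>{1..}. u \<alpha> n) = {\<beta>. \<beta> \<le> \<alpha>} \<and>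
      (\<lambda>n. real (card (u \<alpha> n)) / real (n + 1)) \<longlonglongrightarrow> 0"
  using coherent_at_coherent_family[OF assms(2)] unfolding coherent_at_def by blast

end
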